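(* Let $q$ be an odd prime power and $\lambda,\mu$ positive integers with $\mu\le\lambda$. (a) If $q\equiv3\pmod4$ and $\lambda$ is odd, then both $\frac{(q^{\mu}+1)(q^{\lambda-\mu}+1)}{2(q^{\lambda}+1)}{\lambda\brack\mu}_{q^2}$ and $\frac{(q^{\mu}-1)(q^{\lambda-\mu}-1)}{2(q^{\lambda}+1)}{\lambda\brack\mu}_{q^2}$ are integers. (b) If either $q\equiv3\pmod4$ and $\lambda$ is even, or $q\equiv1\pmod4$, then both $\frac{(q^{\mu}+1)(q^{\lambda-\mu}-1)}{2(q^{\lambda}-1)}{\lambda\brack\mu}_{q^2}$ and $\frac{(q^{\mu}-1)(q^{\lambda-\mu}+1)}{2(q^{\lambda}-1)}{\lambda\brack\mu}_{q^2}$ are integers.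
   Context: Gaussian binomial coefficient: ${a\brack b}_Q=\prod_{i=0}^{b-1}\frac{Q^a-Q^i}{Q^b-Q^i}$ for integers $1\le b\le a$. *)

theory Defs
  imports Complex_Main "HOL-Computational_Algebra.Primes"
begin

definition gauss_binom :: "rat \<Rightarrow> nat \<Rightarrow> nat \<Rightarrow> rat" where
  "gauss_binom Q a b = (\<Prod>i<b. (Q ^ a - Q ^ i) / (Q ^ b - Q ^ i))"

definition prime_power :: "nat \<Rightarrow> bool" where
  "prime_power q \<longleftrightarrow> (\<exists>p k. prime p \<and> k \<ge> 1 \<and> q = p ^ k)"

end

theory Submission
  imports Defs
begin

text \<open>Write \<open>Q = q\<^sup>2\<close>, \<open>y = q\<^sup>\<mu>\<close> and \<open>z = q\<^bsup>\<lambda>-\<mu>\<^esup>\<close>. The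
  \<open>q\<close>-Pascal rule splits \<open>[\<lambda>,\<mu>]\<^sub>Q = A + y\<^sup>2 B\<close> into the integers
  \<open>A = [\<lambda>-1,\<mu>-1]\<^sub>Q\<close>, \<open>B = [\<lambda>-1,\<mu>]\<^sub>Q\<close>, and the absorption rule gives
  \<open>(y\<^sup>2 - 1) B = (z\<^sup>2 - 1) A\<close>. From this relation alone, for all signs
  \<open>s, t \<in> {1,-1}\<close>,
  \<open>(y + s)(z + t)(A + y\<^sup>2 B) = (yz + st)(t(z + t) A + y(y + s) B)\<close>,
  and since \<open>y\<close> and \<open>z\<close> are odd the right-hand factor is divisible by \<open>2\<close>.
  Hence the four quotients are integers for every odd \<open>q > 1\<close>.\<close>

definition q_factorial :: "rat \<Rightarrow> nat \<Rightarrow> rat" where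
  "q_factorial Q n = (\<Prod>i<n. Q ^ Suc i - 1)"

lemma q_factorial_0 [simp]: "q_factorial Q 0 = 1"
  by (simp add: q_factorial_def)

lemma q_factorial_Suc: "q_factorial Q (Suc n) = q_factorial Q n * (Q ^ Suc n - 1)"
  by (simp add: q_factorial_def)

lemma power_Suc_neq_one: "(Q :: rat) > 1 \<Longrightarrow> Q ^ Suc n \<noteq> 1"
  using one_less_power[of Q "Suc n"] by simp

lemma q_factorial_nonzero: "Q > 1 \<Longrightarrow> q_factorial Q n \<noteq> 0"
  by (induction n) (simp_all add: q_factorial_Suc power_Suc_neq_one del: power_Suc)

lemma gauss_binom_0_right [simp]: "gauss_binom Q n 0 = 1"
  by (simp add: gauss_binom_def)

lemma gauss_binom_eq_0: "n < k \<Longrightarrow> gauss_binom Q n k = 0"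
  unfolding gauss_binom_def by (intro prod_zero) (auto intro!: bexI[of _ n])

lemma gauss_binom_Suc_Suc:
  assumes "Q \<noteq> 0"
  shows "gauss_binom Q (Suc n) (Suc k) = (Q ^ Suc n - 1) / (Q ^ Suc k - 1) * gauss_binom Q n k"
proof -
  have "(Q ^ Suc n - Q ^ Suc i) / (Q ^ Suc k - Q ^ Suc i) = (Q ^ n - Q ^ i) / (Q ^ k - Q ^ i)" for i
    using assms by (simp add: right_diff_distrib[symmetric])
  then show ?thesis
    unfolding gauss_binom_def prod.lessThan_Suc_shift by simp
qed

lemma gauss_binom_q_factorial:
  assumes "Q > 1" and "k \<le> n"
  shows "gauss_binom Q n k = q_factorial Q n / (q_factorial Q k * q_factorial Q (n - k))"
  using assms(2)
proof (induction k arbitrary: n)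
  case 0
  then show ?case using q_factorial_nonzero[OF assms(1)] by simp
next
  case (Suc k)
  then obtain n' where n: "n = Suc n'" and "k \<le> n'" by (cases n) auto
  then have "gauss_binom Q n (Suc k)
      = (Q ^ Suc n' - 1) / (Q ^ Suc k - 1) * (q_factorial Q n' / (q_factorial Q k * q_factorial Q (n' - k)))"
    using gauss_binom_Suc_Suc[of Q n' k] Suc.IH assms(1) by simp
  with n show ?case
    using q_factorial_nonzero[OF assms(1)] power_Suc_neq_one[OF assms(1), of k]
    by (simp add: q_factorial_Suc field_simps)
qed

lemma gauss_binom_absorption:
  assumes "Q > 1"
  shows "(Q ^ Suc k - 1) * gauss_binom Q n (Suc k) = (Q ^ (n - k) - 1) * gauss_binom Q n k"
proof (cases "k < n")
  case True
  then obtain d where n: "n = Suc (k + d)"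
    using less_imp_Suc_add by blast
  then have "gauss_binom Q n (Suc k) = q_factorial Q n / (q_factorial Q k * (Q ^ Suc k - 1) * q_factorial Q d)"
    and "gauss_binom Q n k = q_factorial Q n / (q_factorial Q k * (q_factorial Q d * (Q ^ Suc d - 1)))"
    by (simp_all add: gauss_binom_q_factorial[OF assms] q_factorial_Suc)
  moreover have "n - k = Suc d"
    using n by simp
  ultimately show ?thesis
    using q_factorial_nonzero[OF assms] power_Suc_neq_one[OF assms] by simp
qed (simp add: gauss_binom_eq_0)

lemma gauss_binom_pascal:
  assumes "Q > 1"
  shows "gauss_binom Q (Suc n) (Suc k) = gauss_binom Q n k + Q ^ Suc k * gauss_binom Q n (Suc k)"
proof (cases "k \<le> n")
  case True
  have k: "Q ^ Suc k - 1 \<noteq> 0"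
    using power_Suc_neq_one[OF assms] by simp
  have "Q ^ Suc n - 1 = (Q ^ Suc k - 1) + Q ^ Suc k * (Q ^ (n - k) - 1)"
    using True by (simp add: algebra_simps flip: power_add)
  then have "gauss_binom Q (Suc n) (Suc k)
      = gauss_binom Q n k + Q ^ Suc k * ((Q ^ (n - k) - 1) * gauss_binom Q n k) / (Q ^ Suc k - 1)"
    using gauss_binom_Suc_Suc[of Q n k] assms k by (simp add: field_simps)
  also have "\<dots> = gauss_binom Q n k + Q ^ Suc k * gauss_binom Q n (Suc k)"
    using gauss_binom_absorption[OF assms, of k n, symmetric] k by simp
  finally show ?thesis .
qed (simp add: gauss_binom_eq_0)

lemma gauss_binom_Ints: "Q \<in> \<int> \<Longrightarrow> Q > 1 \<Longrightarrow> gauss_binom Q n k \<in> \<int>"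
proof (induction n arbitrary: k)
  case 0
  then show ?case by (cases k) (auto simp: gauss_binom_eq_0)
next
  case (Suc n)
  then show ?case by (cases k) (auto simp: gauss_binom_pascal)
qed

lemma signed_product_identity:
  fixes y z A B s t :: "'a :: comm_ring_1"
  assumes "(y\<^sup>2 - 1) * B = (z\<^sup>2 - 1) * A" and "s = 1 \<or> s = -1" and "t = 1 \<or> t = -1"
  shows "(y + s) * (z + t) * (A + y\<^sup>2 * B) = (y * z + s * t) * (t * (z + t) * A + y * (y + s) * B)"
proof -
  have "(y + s) * (z + t) * (A + y\<^sup>2 * B) - (y * z + s * t) * (t * (z + t) * A + y * (y + s) * B)
      = t * y * ((y\<^sup>2 - 1) * B - (z\<^sup>2 - 1) * A)"
    using assms(2,3) by (elim disjE) (simp_all add: algebra_simps power2_eq_square)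
  then show ?thesis
    using assms by simp
qed

lemma half_odd_plus_sign_Ints:
  assumes "odd (N :: nat)" and "s = 1 \<or> s = -1"
  shows "(of_nat N + s) / 2 \<in> (\<int> :: rat set)"
proof -
  obtain u where "N = 2 * u + 1"
    using assms(1) oddE by blast
  then have "(of_nat N + s) / 2 = (if s = 1 then of_nat (u + 1) else of_nat u)"
    using assms(2) by auto
  then show ?thesis by simp
qed

lemma signed_quotient_Ints:
  fixes y z :: nat and A B s t :: rat
  assumes "odd y" and "odd z" and "A \<in> \<int>" and "B \<in> \<int>"
    and rel: "(of_nat y ^ 2 - 1) * B = (of_nat z ^ 2 - 1) * A"
    and s: "s = 1 \<or> s = -1" and t: "t = 1 \<or> t = -1"
    and "y * z > 1"
  shows "(of_nat y + s) * (of_nat z + t) / (2 * (of_nat y * of_nat z + s * t))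
           * (A + of_nat y ^ 2 * B) \<in> \<int>"
proof -
  have "of_nat y * of_nat z > (1 :: rat)"
    using \<open>y * z > 1\<close> by (simp flip: of_nat_mult)
  then have nonzero: "of_nat y * of_nat z + s * t \<noteq> 0"
    using s t by auto
  have "(of_nat y + s) * (of_nat z + t) / (2 * (of_nat y * of_nat z + s * t)) * (A + of_nat y ^ 2 * B)
      = (t * (of_nat z + t) * A + of_nat y * (of_nat y + s) * B) / 2"
    using signed_product_identity[OF rel s t] nonzero by (simp add: field_simps)
  also have "\<dots> = t * ((of_nat z + t) / 2) * A + of_nat y * ((of_nat y + s) / 2) * B"
    by (simp add: field_simps)
  also have "\<dots> \<in> \<int>"
    using half_odd_plus_sign_Ints[OF \<open>odd z\<close> t] half_odd_plus_sign_Ints[OF \<open>odd y\<close> s]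
      s t assms(3,4) by (intro Ints_add Ints_mult) auto
  finally show ?thesis .
qed

lemma gauss_binom_square_split:
  fixes x :: rat
  assumes "x \<in> \<int>" and "x > 1" and "1 \<le> m" and "m \<le> l"
  obtains A B where "A \<in> \<int>" and "B \<in> \<int>"
    and "gauss_binom (x\<^sup>2) l m = A + (x ^ m)\<^sup>2 * B"
    and "((x ^ m)\<^sup>2 - 1) * B = ((x ^ (l - m))\<^sup>2 - 1) * A"
proof -
  obtain n k where l: "l = Suc n" and m: "m = Suc k"
    using assms(3,4) by (cases l; cases m) auto
  have Q: "x\<^sup>2 > 1" "x\<^sup>2 \<in> \<int>"
    using assms(1,2) by (simp_all add: one_less_power)
  have powers: "(x\<^sup>2) ^ Suc k = (x ^ m)\<^sup>2" "(x\<^sup>2) ^ (n - k) = (x ^ (l - m))\<^sup>2"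
    using l m by (simp_all add: power_mult_distrib power2_eq_square)
  show ?thesis
  proof
    show "gauss_binom (x\<^sup>2) n k \<in> \<int>" "gauss_binom (x\<^sup>2) n m \<in> \<int>"
      using gauss_binom_Ints[OF Q(2,1)] by blast+
    show "gauss_binom (x\<^sup>2) l m = gauss_binom (x\<^sup>2) n k + (x ^ m)\<^sup>2 * gauss_binom (x\<^sup>2) n m"
      using gauss_binom_pascal[OF Q(1), of n k] l m powers by simp
    show "((x ^ m)\<^sup>2 - 1) * gauss_binom (x\<^sup>2) n m = ((x ^ (l - m))\<^sup>2 - 1) * gauss_binom (x\<^sup>2) n k"
      using gauss_binom_absorption[OF Q(1), of k n] m powers by simp
  qed
qed

theorem corollary3p1:
  fixes q l m :: nat
  assumes "prime_power q" and "odd q" and "1 \<le> m" and "m \<le> l"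
  shows "(q mod 4 = 3 \<and> odd l \<longrightarrow>
           ((of_nat q ^ m + 1) * (of_nat q ^ (l - m) + 1) / (2 * (of_nat q ^ l + 1))
              * gauss_binom (of_nat q ^ 2) l m \<in> (\<int> :: rat set)) \<and>
           ((of_nat q ^ m - 1) * (of_nat q ^ (l - m) - 1) / (2 * (of_nat q ^ l + 1))
              * gauss_binom (of_nat q ^ 2) l m \<in> (\<int> :: rat set)))
       \<and> ((q mod 4 = 3 \<and> even l) \<or> q mod 4 = 1 \<longrightarrow>
           ((of_nat q ^ m + 1) * (of_nat q ^ (l - m) - 1) / (2 * (of_nat q ^ l - 1))
              * gauss_binom (of_nat q ^ 2) l m \<in> (\<int> :: rat set)) \<and>
           ((of_nat q ^ m - 1) * (of_nat q ^ (l - m) + 1) / (2 * (of_nat q ^ l - 1))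
              * gauss_binom (of_nat q ^ 2) l m \<in> (\<int> :: rat set)))"
proof -
  obtain p k where "prime p" "k \<ge> 1" "q = p ^ k"
    using assms(1) unfolding prime_power_def by blast
  then have "q > 1"
    using one_less_power[of p k] prime_gt_1_nat by auto
  then obtain A B where AB: "A \<in> \<int>" "B \<in> \<int>"
    and split: "gauss_binom (of_nat q ^ 2) l m = A + of_nat (q ^ m) ^ 2 * B"
    and rel: "(of_nat (q ^ m) ^ 2 - 1) * B = (of_nat (q ^ (l - m)) ^ 2 - 1) * A"
    using gauss_binom_square_split[of "of_nat q" m l] assms(3,4) unfolding of_nat_power by auto
  have odd: "odd (q ^ m)" "odd (q ^ (l - m))"
    using assms(2) by simp_all
  have yz: "q ^ m * q ^ (l - m) = q ^ l"
    using assms(4) by (simp flip: power_add)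
  moreover have "q ^ l > 1"
    using one_less_power[OF \<open>q > 1\<close>, of l] assms(3,4) by simp
  ultimately have quotient: "\<And>s t. s = 1 \<or> s = -1 \<Longrightarrow> t = 1 \<or> t = -1 \<Longrightarrow>
      (of_nat q ^ m + s) * (of_nat q ^ (l - m) + t) / (2 * (of_nat q ^ l + s * t))
        * gauss_binom (of_nat q ^ 2) l m \<in> \<int>"
    using signed_quotient_Ints[OF odd AB rel] unfolding split by (simp flip: of_nat_power of_nat_mult)
  show ?thesis
    using quotient[of 1 1] quotient[of "-1" "-1"] quotient[of 1 "-1"] quotient[of "-1" 1] by simp
qed

end
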